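(* Let $R$ be a $*$-reducing ring and let $p,q\in R$ be projections. Then the following are equivalent: (1) $pq+qp$ is MP invertible; (2) $p+q$ and $pq$ are both MP invertible.
   Context: $R$ is an associative ring with identity $1$ and an involution $a\mapsto a^*$ (satisfying $(a^* )^*=a$, $(a+b)^*=a^*+b^*$, $(ab)^*=b^*a^*$). $R$ is $*$-reducing if $a^*a=0$ implies $a=0$ for all $a\in R$. An element $a$ is MP invertible if there is $b$ with $aba=a$, $bab=b$, $(ab)^*=ab$, $(ba)^*=ba$. A projection is an element $p$ with $p^2=p=p^*$. *)

theory Defs
  imports Main
begin

class star_ring = ring_1 +
  fixes star :: "'a \<Rightarrow> 'a"
  assumes star_star: "star (star a) = a"
    and star_add: "star (a + b) = star a + star b"
    and star_mult: "star (a * b) = star b * star a"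

definition star_reducing :: "('a::star_ring) itself \<Rightarrow> bool" where
  "star_reducing _ \<longleftrightarrow> (\<forall>a::'a. star a * a = 0 \<longrightarrow> a = 0)"

definition MP_invertible :: "'a::star_ring \<Rightarrow> bool" where
  "MP_invertible a \<longleftrightarrow> (\<exists>b. a * b * a = a \<and> b * a * b = b \<and>
      star (a * b) = a * b \<and> star (b * a) = b * a)"

definition projection :: "'a::star_ring \<Rightarrow> bool" where
  "projection p \<longleftrightarrow> p * p = p \<and> p = star p"

end

theory Submission
  imports Defs
begin

text \<open>For hermitian \<open>a\<close>, MP invertibility amounts to \<open>a \<in> a\<^sup>2R\<close>, and in a \<open>*\<close>-reducing
ring \<open>x\<close> is MP invertible iff \<open>x x\<^sup>*\<close> is. With \<open>s = p + q\<close> and \<open>r = s - 1\<close> one has \<open>pq + qp = s r\<close>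
and \<open>(pq)(pq)\<^sup>* = pqp = p r\<^sup>2 = r\<^sup>2 p\<close>. Since \<open>s\<close> and \<open>r\<close> commute, \<open>s r \<in> (s r)\<^sup>2R\<close> iff
\<open>s \<in> s\<^sup>2R\<close> and \<open>r \<in> r\<^sup>2R\<close>. Finally \<open>r \<in> r\<^sup>2R\<close> iff \<open>pqp \<in> (pqp)\<^sup>2R\<close>: the element
\<open>r\<^sup>2 = pqp + (1-p)(1-q)(1-p)\<close> is block diagonal with respect to \<open>p\<close>, so an inner inverse of
\<open>pqp\<close> yields one of \<open>r\<^sup>2\<close>, and \<open>*\<close>-reducedness upgrades regularity of \<open>r\<^sup>2\<close> to \<open>r \<in> r\<^sup>2R\<close>.\<close>

lemma star_zero [simp]: "star (0::'a::star_ring) = 0"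
proof -
  have "star (0::'a) = star 0 + star 0"
    using star_add [of 0 0] by simp
  then show ?thesis by simp
qed

lemma star_one [simp]: "star (1::'a::star_ring) = 1"
  using star_mult [of "star (1::'a)" 1] by (simp add: star_star)

lemma star_uminus: "star (- a) = - star (a::'a::star_ring)"
  using star_add [of a "- a"] by (simp add: eq_neg_iff_add_eq_0 add.commute)

lemma star_diff: "star (a - b) = star a - star (b::'a::star_ring)"
  by (simp only: diff_conv_add_uminus star_add star_uminus)

lemmas star_simps = star_star star_add star_mult star_uminus star_diff

lemma star_eq_zero_iff [simp]: "star a = 0 \<longleftrightarrow> (a::'a::star_ring) = 0"
  by (metis star_star star_zero)

lemma star_reducingD:
  fixes a :: "'a::star_ring"
  assumes "star_reducing TYPE('a)" and "star a * a = 0"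
  shows "a = 0"
  using assms unfolding star_reducing_def by blast

lemma star_reducingD':
  fixes a :: "'a::star_ring"
  assumes "star_reducing TYPE('a)" and "a * star a = 0"
  shows "a = 0"
  using star_reducingD [OF assms(1), of "star a"] assms(2) by (simp add: star_star)

lemma projection_mult_star_eq_zero:
  fixes c q :: "'a::star_ring"
  assumes "star_reducing TYPE('a)" and "projection q" and "c * q * star c = 0"
  shows "c * q = 0"
proof -
  from assms(2) have "q * q = q" and "star q = q"
    by (simp_all add: projection_def)
  have "(c * q) * star (c * q) = c * (q * q) * star c"
    using \<open>star q = q\<close> by (simp add: star_mult mult.assoc)
  then have "(c * q) * star (c * q) = c * q * star c"
    using \<open>q * q = q\<close> by simp
  with assms(3) show ?thesis
    using star_reducingD' [OF assms(1), of "c * q"] by simp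
qed

lemma hermitian_mult_square_eq_zero:
  fixes a x :: "'a::star_ring"
  assumes "star_reducing TYPE('a)" and "star a = a" and "a * a * x = 0"
  shows "a * x = 0"
proof -
  have "star (a * x) * (a * x) = star x * (a * a * x)"
    using assms(2) by (simp add: star_mult mult.assoc)
  then have "star (a * x) * (a * x) = 0"
    using assms(3) by simp
  then show ?thesis
    by (rule star_reducingD [OF assms(1)])
qed

definition in_square_right_ideal :: "'a::ring_1 \<Rightarrow> bool" where
  "in_square_right_ideal a \<longleftrightarrow> (\<exists>x. a = a * a * x)"

text \<open>For hermitian \<open>a = a\<^sup>2x\<close>, also \<open>a = (x\<^sup>*)a\<^sup>2\<close>, and \<open>g = a x\<^sup>2 = (x\<^sup>*)\<^sup>2a\<close> is the group
inverse of \<open>a\<close>.\<close>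

lemma hermitian_group_inverse:
  fixes a x :: "'a::star_ring"
  assumes herm: "star a = a" and ax: "a = a * a * x"
  obtains g where "a * g = g * a" "a * g * a = a" "g * a * g = g" "star g = g"
proof
  define y where "y = star x"
  have ya: "a = y * a * a"
    using arg_cong [OF ax, of star] by (simp add: star_simps herm y_def mult.assoc)
  have xy: "a * x = y * a"
    by (metis ax ya mult.assoc)
  define g where "g = a * x * x"
  have g_alt: "g = y * y * a"
    by (metis g_def xy mult.assoc)
  show "star g = g"
    using g_alt by (simp add: g_def star_simps herm y_def mult.assoc)
  have ag: "a * g = a * x"
    by (metis ax g_def mult.assoc)
  have ga: "g * a = a * x"
    by (metis g_alt xy ya mult.assoc)
  show "a * g = g * a"
    using ag ga by simp
  show aga: "a * g * a = a"
    using ag xy ya by (simp add: mult.assoc)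
  show "g * a * g = g"
    by (metis aga ag ga g_def mult.assoc)
qed

lemma hermitian_MP_invertible_iff:
  fixes a :: "'a::star_ring"
  assumes herm: "star a = a"
  shows "MP_invertible a \<longleftrightarrow> in_square_right_ideal a"
proof
  assume "MP_invertible a"
  then obtain b where "a * b * a = a" and "star (b * a) = b * a"
    unfolding MP_invertible_def by blast
  then have "a = a * a * star b"
    using herm by (metis star_mult mult.assoc)
  then show "in_square_right_ideal a"
    unfolding in_square_right_ideal_def by blast
next
  assume "in_square_right_ideal a"
  then obtain x where "a = a * a * x"
    unfolding in_square_right_ideal_def by blast
  from hermitian_group_inverse [OF herm this]
  obtain g where "a * g = g * a" "a * g * a = a" "g * a * g = g" "star g = g" .
  then show "MP_invertible a"
    unfolding MP_invertible_def using herm by (metis star_mult)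
qed

lemma MP_invertible_mult_star:
  fixes a :: "'a::star_ring"
  assumes "MP_invertible a"
  shows "MP_invertible (a * star a)"
proof -
  obtain b where aba: "a * b * a = a" and bab: "b * a * b = b"
    and ab: "star (a * b) = a * b" and ba: "star (b * a) = b * a"
    using assms unfolding MP_invertible_def by blast
  have aba': "a * (b * (a * z)) = a * z" for z
    using aba by (simp add: mult.assoc [symmetric])
  have ba': "star a * (star b * z) = b * (a * z)" for z
    using ba by (simp add: star_mult mult.assoc [symmetric])
  have ab': "star b * star a = a * b"
    using ab by (simp add: star_mult)
  have h_b: "a * star a * (star b * b) = a * b"
    by (simp add: mult.assoc ba' aba')
  have b_h: "star b * b * (a * star a) = a * b"
  proof -
    have "star b * b * (a * star a) = (star b * star a) * (star b * star a)"
      by (simp add: mult.assoc ba')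
    also have "\<dots> = a * b"
      by (simp add: ab' mult.assoc aba')
    finally show ?thesis .
  qed
  have "a * b * (a * star a) = a * star a"
    by (simp add: mult.assoc aba')
  moreover have "a * b * (star b * b) = star b * b"
  proof -
    have "a * b * (star b * b) = star b * (star a * star b) * b"
      by (simp add: ab' [symmetric] mult.assoc)
    also have "\<dots> = star b * b"
      using bab by (simp add: ba' mult.assoc)
    finally show ?thesis .
  qed
  ultimately show ?thesis
    unfolding MP_invertible_def
    by (intro exI [of _ "star b * b"]) (simp only: h_b b_h ab simp_thms)
qed

text \<open>Conversely, if \<open>h = a a\<^sup>*\<close> has group inverse \<open>g\<close>, then \<open>a\<^sup>*g\<close> is the MP inverse of \<open>a\<close>:
the projection \<open>e = h g\<close> satisfies \<open>(1 - e) h = 0\<close>, hence \<open>(1 - e) a = 0\<close> by \<open>*\<close>-reducedness.\<close>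

lemma MP_invertible_of_mult_star:
  fixes a :: "'a::star_ring"
  assumes red: "star_reducing TYPE('a)" and "MP_invertible (a * star a)"
  shows "MP_invertible a"
proof -
  define h where "h = a * star a"
  have herm: "star h = h"
    by (simp add: h_def star_simps)
  then obtain x where "h = h * h * x"
    using assms(2) hermitian_MP_invertible_iff
    unfolding h_def in_square_right_ideal_def by blast
  from hermitian_group_inverse [OF herm this]
  obtain g where hg: "h * g = g * h" and hgh: "h * g * h = h" and ghg: "g * h * g = g"
    and g: "star g = g" .
  define e where "e = h * g"
  have e: "star e = e"
    using hg herm g by (simp add: e_def star_mult)
  have "((1 - e) * a) * star ((1 - e) * a) = (1 - e) * h * (1 - e)"
    by (simp add: h_def star_simps e mult.assoc)
  also have "\<dots> = 0"
    using hgh by (simp add: e_def algebra_simps)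
  finally have "e * a = a"
    using star_reducingD' [OF red, of "(1 - e) * a"] by (simp add: algebra_simps)
  define b where "b = star a * g"
  have "a * b * a = a"
    using \<open>e * a = a\<close> by (simp add: b_def e_def h_def mult.assoc)
  moreover have "b * a * b = b"
    using ghg by (simp add: b_def h_def mult.assoc)
  moreover have "star (a * b) = a * b"
    using e by (simp add: b_def e_def h_def mult.assoc)
  moreover have "star (b * a) = b * a"
    using g by (simp add: b_def star_simps mult.assoc)
  ultimately show ?thesis
    unfolding MP_invertible_def by blast
qed

lemma MP_invertible_mult_star_iff:
  fixes a :: "'a::star_ring"
  assumes "star_reducing TYPE('a)"
  shows "MP_invertible (a * star a) \<longleftrightarrow> MP_invertible a"
  using MP_invertible_mult_star MP_invertible_of_mult_star [OF assms] by blast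

lemma in_square_right_ideal_mult_diff_one:
  fixes a :: "'a::ring_1"
  assumes "in_square_right_ideal (a * (a - 1))"
  shows "in_square_right_ideal a" and "in_square_right_ideal (a - 1)"
proof -
  obtain x where x: "a * (a - 1) = a * (a - 1) * (a * (a - 1)) * x"
    using assms unfolding in_square_right_ideal_def by blast
  have "a = a * a - a * (a - 1)"
    by (simp add: algebra_simps)
  also have "\<dots> = a * a * (1 - (a - 1) * (a - 1) * x)"
    by (subst x) (simp add: algebra_simps)
  finally show "in_square_right_ideal a"
    unfolding in_square_right_ideal_def by blast
  have "a - 1 = a * (a - 1) - (a - 1) * (a - 1)"
    by (simp add: algebra_simps)
  also have "\<dots> = (a - 1) * (a - 1) * (a * a * x - 1)"
    by (subst x) (simp add: algebra_simps)
  finally show "in_square_right_ideal (a - 1)"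
    unfolding in_square_right_ideal_def by blast
qed

lemma in_square_right_ideal_mult_commuting:
  fixes a b g :: "'a::ring_1"
  assumes ag: "a * g = g * a" and aga: "a * g * a = a" and bg: "b * g = g * b"
    and ab: "a * b = b * a" and "in_square_right_ideal b"
  shows "in_square_right_ideal (a * b)"
proof -
  obtain z where z: "b = b * b * z"
    using assms(5) unfolding in_square_right_ideal_def by blast
  have "a * b = a * a * g * (b * b * z)"
    using ag aga z by (metis mult.assoc)
  also have "\<dots> = a * b * (a * b) * (g * z)"
    using ab bg by (metis mult.assoc)
  finally show ?thesis
    unfolding in_square_right_ideal_def by blast
qed

lemma in_square_right_ideal_square:
  fixes a :: "'a::ring_1"
  assumes "in_square_right_ideal a"
  shows "in_square_right_ideal (a * a)"
proof -
  obtain x where x: "a = a * a * x"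
    using assms unfolding in_square_right_ideal_def by blast
  then have "a * a = a * a * (a * a) * (x * x)"
    by (metis mult.assoc)
  then show ?thesis
    unfolding in_square_right_ideal_def by blast
qed

lemma in_square_right_ideal_idempotent_mult:
  fixes e c :: "'a::ring_1"
  assumes "e * e = e" and "e * c = c * e" and "in_square_right_ideal c"
  shows "in_square_right_ideal (e * c)"
proof -
  obtain x where x: "c = c * c * x"
    using assms(3) unfolding in_square_right_ideal_def by blast
  then have "e * c = e * c * (e * c) * x"
    using assms(1,2) by (metis mult.assoc)
  then show ?thesis
    unfolding in_square_right_ideal_def by blast
qed

lemma hermitian_in_square_right_ideal_of_regular_square:
  fixes a z :: "'a::star_ring"
  assumes red: "star_reducing TYPE('a)" and herm: "star a = a"
    and reg: "a * a * z * (a * a) = a * a"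
  shows "in_square_right_ideal a"
proof -
  have "a * a * (1 - z * a * a) = 0"
    using reg by (simp add: algebra_simps mult.assoc)
  then have "a * (1 - z * a * a) = 0"
    by (rule hermitian_mult_square_eq_zero [OF red herm])
  then have "a = a * z * a * a"
    by (simp add: algebra_simps mult.assoc)
  then have "star a = star (a * z * a * a)"
    by simp
  then have "a = a * a * (star z * a)"
    using herm by (simp add: star_mult mult.assoc)
  then show ?thesis
    unfolding in_square_right_ideal_def by blast
qed

lemma hermitian_in_square_right_ideal_mult_diff_one_iff:
  fixes a :: "'a::star_ring"
  assumes herm: "star a = a"
  shows "in_square_right_ideal (a * (a - 1)) \<longleftrightarrow>
    in_square_right_ideal a \<and> in_square_right_ideal (a - 1)"
proof (intro iffI conjI)
  assume "in_square_right_ideal a \<and> in_square_right_ideal (a - 1)"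
  then obtain x where "a = a * a * x" and a1: "in_square_right_ideal (a - 1)"
    unfolding in_square_right_ideal_def by blast
  from hermitian_group_inverse [OF herm this(1)]
  obtain g where "a * g = g * a" and "a * g * a = a" .
  moreover from this(1) have "(a - 1) * g = g * (a - 1)"
    by (simp add: algebra_simps)
  moreover have "a * (a - 1) = (a - 1) * a"
    by (simp add: algebra_simps)
  ultimately show "in_square_right_ideal (a * (a - 1))"
    using in_square_right_ideal_mult_commuting a1 by blast
qed (fact in_square_right_ideal_mult_diff_one)+

lemma idempotents_sum_mult:
  fixes p q :: "'a::ring_1"
  assumes "p * p = p" and "q * q = q"
  shows "p * q + q * p = (p + q) * (p + q - 1)"
  using assms by (simp add: algebra_simps)

lemma idempotents_compression:
  fixes p q :: "'a::ring_1"
  assumes pp: "p * p = p" and qq: "q * q = q"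
  shows "p * ((p + q - 1) * (p + q - 1)) = p * q * p"
    and "(p + q - 1) * (p + q - 1) * p = p * q * p"
proof -
  have pp': "p * (p * x) = p * x" for x
    using pp by (metis mult.assoc)
  show "p * ((p + q - 1) * (p + q - 1)) = p * q * p"
    and "(p + q - 1) * (p + q - 1) * p = p * q * p"
    by (simp_all add: algebra_simps pp pp' qq)
qed

lemma idempotents_in_square_right_ideal_compression:
  fixes p q :: "'a::ring_1"
  assumes "p * p = p" and "q * q = q" and "in_square_right_ideal (p + q - 1)"
  shows "in_square_right_ideal (p * q * p)"
proof -
  have "in_square_right_ideal (p * ((p + q - 1) * (p + q - 1)))"
    using assms idempotents_compression [OF assms(1,2)]
    by (intro in_square_right_ideal_idempotent_mult in_square_right_ideal_square) simp_all
  then show ?thesis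
    using idempotents_compression(1) [OF assms(1,2)] by simp
qed

lemma idempotents_diff_one_square_blocks:
  fixes p q :: "'a::ring_1"
  assumes pp: "p * p = p" and qq: "q * q = q"
  defines "R \<equiv> (p + q - 1) * (p + q - 1)" and "W \<equiv> (1 - p) * (1 - q) * (1 - p)"
  shows "R = p * q * p + W"
    and "W * W + (1 - p) * q * p * q * (1 - p) = W"
    and "R * (1 - p) * R = W * W"
    and "R * (1 - p) * q = (1 - p) * q * p * q"
    and "q * (1 - p) * R = q * p * q * (1 - p)"
proof -
  have pp': "p * (p * x) = p * x" and qq': "q * (q * x) = q * x" for x
    using pp qq by (simp_all add: mult.assoc [symmetric])
  show "R = p * q * p + W" "W * W + (1 - p) * q * p * q * (1 - p) = W" "R * (1 - p) * R = W * W"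
    "R * (1 - p) * q = (1 - p) * q * p * q" "q * (1 - p) * R = q * p * q * (1 - p)"
    unfolding R_def W_def by (simp_all add: algebra_simps pp pp' qq qq')
qed

text \<open>In the witness, \<open>v\<close> inverts the block \<open>pqp\<close> of \<open>(p + q - 1)\<^sup>2\<close> and the remaining two
summands invert the block \<open>(1-p)(1-q)(1-p)\<close>.\<close>

lemma idempotents_square_regular_of_compression_regular:
  fixes p q v :: "'a::ring_1"
  assumes pp: "p * p = p" and qq: "q * q = q"
    and wvw: "p * q * p * v * (p * q * p) = p * q * p" and wv: "p * q * p * v = v * (p * q * p)"
    and pv: "p * v = v" and vp: "v * p = v" and wvq: "p * q * p * v * q = p * q"
  shows "(p + q - 1) * (p + q - 1) * (v + (1 - p) + (1 - p) * q * v * v * q * (1 - p))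
           * ((p + q - 1) * (p + q - 1)) = (p + q - 1) * (p + q - 1)"
proof -
  define w where "w = p * q * p"
  define R where "R = (p + q - 1) * (p + q - 1)"
  define W where "W = (1 - p) * (1 - q) * (1 - p)"
  note blocks = idempotents_diff_one_square_blocks [OF pp qq, folded R_def W_def]
  have wvw': "w * v * w = w"
    using wvw by (simp add: w_def)
  have vp': "v * (p * x) = v * x" for x
    using vp by (simp add: mult.assoc [symmetric])
  have "R * v * R = R * p * v * (p * R)"
    by (simp add: mult.assoc pv vp')
  also have "\<dots> = w"
    using idempotents_compression [OF pp qq] wvw' by (simp add: R_def w_def)
  finally have block1: "R * v * R = w" .
  have "p * q * v * v * q * p * q = (p * q * v) * (v * q * p) * q"
    by (simp add: mult.assoc)
  also have "\<dots> = (w * v * w) * v * q"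
    using wv by (simp add: w_def mult.assoc pv vp')
  also have "\<dots> = p * q"
    using wvw' wvq by (simp add: w_def)
  finally have pqvvqpq: "p * q * v * v * q * p * q = p * q" .
  have "R * ((1 - p) * q * v * v * q * (1 - p)) * R
      = (R * (1 - p) * q) * (v * v) * (q * (1 - p) * R)"
    by (simp add: mult.assoc)
  also have "\<dots> = (1 - p) * q * (p * q * v * v * q * p * q) * (1 - p)"
    unfolding blocks(4,5) by (simp add: mult.assoc)
  finally have block3: "R * ((1 - p) * q * v * v * q * (1 - p)) * R = (1 - p) * q * p * q * (1 - p)"
    unfolding pqvvqpq by (simp add: mult.assoc)
  have "R * (v + (1 - p) + (1 - p) * q * v * v * q * (1 - p)) * R
      = R * v * R + R * (1 - p) * R + R * ((1 - p) * q * v * v * q * (1 - p)) * R"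
    by (simp add: distrib_left distrib_right)
  also have "\<dots> = w + (W * W + (1 - p) * q * p * q * (1 - p))"
    by (simp only: block1 blocks(3) block3 add.assoc)
  also have "\<dots> = R"
    by (simp only: blocks(1,2) w_def)
  finally show ?thesis
    unfolding R_def .
qed

lemma group_inverse_absorbs:
  fixes w v p :: "'a::ring_1"
  assumes wv: "w * v = v * w" and vwv: "v * w * v = v" and pw: "p * w = w" and wp: "w * p = w"
  shows "p * v = v" and "v * p = v"
proof -
  have wvv: "w * (v * v) = v"
    using vwv wv by (simp add: mult.assoc [symmetric])
  have vvw: "v * v * w = v"
  proof -
    have "v * v * w = v * (w * v)"
      by (simp add: mult.assoc wv)
    then show ?thesis
      using vwv by (simp add: mult.assoc)
  qed
  have "p * v = p * w * (v * v)"
    by (simp add: mult.assoc wvv)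
  then show "p * v = v"
    using pw wvv by simp
  have "v * p = v * v * (w * p)"
    by (simp add: mult.assoc [symmetric] vvw)
  then show "v * p = v"
    using wp vvw by simp
qed

lemma projections_compression_group_inverse:
  fixes p q :: "'a::star_ring"
  assumes red: "star_reducing TYPE('a)" and p: "projection p" and q: "projection q"
    and "in_square_right_ideal (p * q * p)"
  obtains v where "p * q * p * v * (p * q * p) = p * q * p" "p * q * p * v = v * (p * q * p)"
    "p * v = v" "v * p = v" "p * q * p * v * q = p * q"
proof -
  have pp: "p * p = p" and sp: "star p = p" and sq: "star q = q"
    using p q by (simp_all add: projection_def)
  define w where "w = p * q * p"
  have herm: "star w = w"
    by (simp add: w_def star_mult sp sq mult.assoc)
  obtain x where "w = w * w * x"
    using assms(4) unfolding in_square_right_ideal_def w_def by blast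
  from hermitian_group_inverse [OF herm this]
  obtain v where wv: "w * v = v * w" and wvw: "w * v * w = w" and vwv: "v * w * v = v"
    and sv: "star v = v" .
  have pw: "p * w = w"
    using pp by (simp add: w_def mult.assoc [symmetric])
  have wp: "w * p = w"
    using pp by (simp add: w_def mult.assoc)
  from group_inverse_absorbs [OF wv vwv pw wp]
  have pv: "p * v = v" and vp: "v * p = v" .
  define e where "e = w * v"
  have se: "star e = e"
    using wv by (simp add: e_def star_mult herm sv)
  have pe: "p * e = e" and ew: "e * w = w"
    using pw wvw by (simp_all add: e_def mult.assoc [symmetric])
  have ep: "e * p = e"
    using vp by (simp add: e_def mult.assoc)
  have "(p - e) * p = p - e"
    using pp ep by (simp add: algebra_simps)
  then have "(p - e) * q * p = (p - e) * w"
    by (metis w_def mult.assoc)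
  also have "\<dots> = 0"
    using pw ew by (simp add: algebra_simps)
  finally have "(p - e) * q * p = 0" .
  moreover have "(p - e) * q * e = 0"
  proof -
    have "(p - e) * q * e = (p - e) * q * p * e"
      by (simp add: mult.assoc pe)
    with \<open>(p - e) * q * p = 0\<close> show ?thesis
      by simp
  qed
  ultimately have "(p - e) * q * star (p - e) = 0"
    by (simp add: star_diff sp se right_diff_distrib)
  then have "(p - e) * q = 0"
    by (rule projection_mult_star_eq_zero [OF red q])
  then have "w * v * q = p * q"
    by (simp add: e_def algebra_simps)
  then show ?thesis
    using that wvw wv pv vp unfolding w_def by blast
qed

lemma projections_in_square_right_ideal_diff_one:
  fixes p q :: "'a::star_ring"
  assumes red: "star_reducing TYPE('a)" and p: "projection p" and q: "projection q"
    and "in_square_right_ideal (p * q * p)"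
  shows "in_square_right_ideal (p + q - 1)"
proof -
  have pp: "p * p = p" and qq: "q * q = q" and herm: "star (p + q - 1) = p + q - 1"
    using p q by (simp_all add: projection_def star_diff star_add)
  from projections_compression_group_inverse [OF assms]
  obtain v where "p * q * p * v * (p * q * p) = p * q * p" "p * q * p * v = v * (p * q * p)"
    "p * v = v" "v * p = v" "p * q * p * v * q = p * q" .
  from idempotents_square_regular_of_compression_regular [OF pp qq this]
  show ?thesis
    by (rule hermitian_in_square_right_ideal_of_regular_square [OF red herm])
qed

theorem theorem2p14:
  fixes p q :: "'a::star_ring"
  assumes "star_reducing TYPE('a)"
    and "projection p" and "projection q"
  shows "MP_invertible (p * q + q * p) \<longleftrightarrow> (MP_invertible (p + q) \<and> MP_invertible (p * q))"
proof -
  have pp: "p * p = p" and qq: "q * q = q" and sp: "star p = p" and sq: "star q = q"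
    using assms(2,3) by (simp_all add: projection_def)
  have herm_s: "star (p + q) = p + q"
    by (simp add: star_add sp sq)
  have herm_pqp: "star (p * q * p) = p * q * p"
    by (simp add: star_mult sp sq mult.assoc)
  have herm_t: "star (p * q + q * p) = p * q + q * p"
    by (simp add: star_add star_mult sp sq add.commute)
  have "MP_invertible (p * q + q * p) \<longleftrightarrow> in_square_right_ideal ((p + q) * (p + q - 1))"
    using hermitian_MP_invertible_iff [OF herm_t] idempotents_sum_mult [OF pp qq] by simp
  also have "\<dots> \<longleftrightarrow> MP_invertible (p + q) \<and> in_square_right_ideal (p + q - 1)"
    using hermitian_in_square_right_ideal_mult_diff_one_iff [OF herm_s]
      hermitian_MP_invertible_iff [OF herm_s] by (simp add: add_diff_eq)
  also have "in_square_right_ideal (p + q - 1) \<longleftrightarrow> in_square_right_ideal (p * q * p)"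
    using idempotents_in_square_right_ideal_compression [OF pp qq]
      projections_in_square_right_ideal_diff_one [OF assms] by blast
  also have "\<dots> \<longleftrightarrow> MP_invertible (p * q)"
  proof -
    have "p * q * star (p * q) = p * (q * q) * p"
      by (simp add: star_mult sp sq mult.assoc)
    then show ?thesis
      using hermitian_MP_invertible_iff [OF herm_pqp]
        MP_invertible_mult_star_iff [OF assms(1), of "p * q"]
      by (simp add: qq)
  qed
  finally show ?thesis .
qed

end
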